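(* Let $X$ be a locally compact space such that the closure of every quasi-compact subspace is quasi-compact. Then (a) the identity map $\mathcal{H}'X\to\mathcal{H}X$ is a homeomorphism; (b) for every compact subspace $K\subset X$ there exists $C_K>0$ such that for all $S\in\mathcal{H}X$, $S\cap K\neq\emptyset$ implies $\#S\le C_K$. (c) Moreover, if $G$ is a locally compact proper groupoid with $G^{(0)}$ Hausdorff, then the closure in $G$ of every quasi-compact subspace of $G$ is quasi-compact (so (a) and (b) hold for $X=G$).
   Context: Quasi-compact: every open cover has a finite subcover; compact: quasi-compact Hausdorff; locally compact: every point has a compact neighbourhood (not necessarily Hausdorff). $\mathcal{H}X$ is the set of nonempty $S\subset X$ such that for every finite family $(V_i)$ of open sets with $S\cap V_i\neq\emptyset$ for all $i$, $\bigcap_iV_i\neq\emptyset$; its topology is generated by the sets $\Omega_V=\{S: S\cap V\ne\emptyset\}$ ($V$ open) and $\Omega^Q=\{S:S\cap Q=\emptyset\}$ ($Q$ quasi-compact). $\mathcal{H}'X$ is the set $\mathcal{H}X$ with the coarsest topology making the identity $\mathcal{H}'X\to\mathcal{H}X$ continuous and making $\Omega'_V=\{S\in\mathcal{H}X: S\subset V\}$ open for every relatively quasi-compact open $V\subset X$. $\#S$ is the cardinality. A groupoid $G$ is proper if $(r,s)\colon G\to G^{(0)}\times G^{(0)}$ is closed with quasi-compact fibres. *)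

theory Defs
  imports "HOL-Analysis.Analysis"
begin

text \<open>Conventions: quasi-compact = compactin (no separation axiom); compact = quasi-compact
  and Hausdorff (as a subspace).\<close>

definition qcompact :: "'a topology \<Rightarrow> 'a set \<Rightarrow> bool" where
  "qcompact X K \<longleftrightarrow> compactin X K"

definition hcompact :: "'a topology \<Rightarrow> 'a set \<Rightarrow> bool" where
  "hcompact X K \<longleftrightarrow> compactin X K \<and> Hausdorff_space (subtopology X K)"

definition loc_compact :: "'a topology \<Rightarrow> bool" where
  "loc_compact X \<longleftrightarrow> (\<forall>x\<in>topspace X. \<exists>U K. openin X U \<and> x \<in> U \<and> U \<subseteq> K \<and> hcompact X K)"

definition rel_qcompact :: "'a topology \<Rightarrow> 'a set \<Rightarrow> bool" where
  "rel_qcompact X V \<longleftrightarrow> V \<subseteq> topspace X \<and> compactin X (X closure_of V)"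

definition HSet :: "'a topology \<Rightarrow> 'a set set" where
  "HSet X = {S. S \<subseteq> topspace X \<and> S \<noteq> {} \<and>
      (\<forall>\<V>. finite \<V> \<longrightarrow> (\<forall>V\<in>\<V>. openin X V \<and> S \<inter> V \<noteq> {}) \<longrightarrow>
            topspace X \<inter> \<Inter>\<V> \<noteq> {})}"

definition Omega :: "'a topology \<Rightarrow> 'a set \<Rightarrow> 'a set set" where
  "Omega X V = {S \<in> HSet X. S \<inter> V \<noteq> {}}"

definition OmegaQ :: "'a topology \<Rightarrow> 'a set \<Rightarrow> 'a set set" where
  "OmegaQ X Q = {S \<in> HSet X. S \<inter> Q = {}}"

definition OmegaPrime :: "'a topology \<Rightarrow> 'a set \<Rightarrow> 'a set set" where
  "OmegaPrime X V = {S \<in> HSet X. S \<subseteq> V}"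

text \<open>Topology of \<open>\<H>X\<close>: generated by the \<open>\<Omega>_V\<close> (V open) and the \<open>\<Omega>^Q\<close> (Q quasi-compact).
  (\<open>HSet X\<close> itself is included so the underlying set is exactly \<open>HSet X\<close>; it equals
  \<open>\<Omega>_{X}\<close> anyway.)\<close>
definition HTop :: "'a topology \<Rightarrow> 'a set topology" where
  "HTop X = topology_generated_by
     ({HSet X} \<union> {Omega X V | V. openin X V} \<union> {OmegaQ X Q | Q. compactin X Q})"

definition HTop' :: "'a topology \<Rightarrow> 'a set topology" where
  "HTop' X = topology_generated_by
     ({HSet X} \<union> {U. openin (HTop X) U} \<union> {OmegaPrime X V | V. openin X V \<and> rel_qcompact X V})"

text \<open>Topological groupoid: arrows are the points of \<open>G\<close>; the unit space \<open>U = G^{(0)}\<close> is a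
  subset of the arrows with the subspace topology; \<open>r, s\<close> range, source; \<open>m\<close> multiplication
  defined on composable pairs \<open>s g = r h\<close>; \<open>i\<close> inverse.\<close>
definition topological_groupoid ::
  "'a topology \<Rightarrow> 'a set \<Rightarrow> ('a \<Rightarrow> 'a) \<Rightarrow> ('a \<Rightarrow> 'a) \<Rightarrow> ('a \<Rightarrow> 'a \<Rightarrow> 'a) \<Rightarrow> ('a \<Rightarrow> 'a) \<Rightarrow> bool" where
  "topological_groupoid G U r s m i \<longleftrightarrow>
     U \<subseteq> topspace G \<and>
     (\<forall>g\<in>topspace G. r g \<in> U \<and> s g \<in> U \<and> i g \<in> topspace G) \<and>
     (\<forall>u\<in>U. r u = u \<and> s u = u) \<and>
     (\<forall>g\<in>topspace G. \<forall>h\<in>topspace G. s g = r h \<longrightarrow>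
          m g h \<in> topspace G \<and> r (m g h) = r g \<and> s (m g h) = s h) \<and>
     (\<forall>g\<in>topspace G. \<forall>h\<in>topspace G. \<forall>k\<in>topspace G. s g = r h \<longrightarrow> s h = r k \<longrightarrow>
          m (m g h) k = m g (m h k)) \<and>
     (\<forall>g\<in>topspace G. m (r g) g = g \<and> m g (s g) = g) \<and>
     (\<forall>g\<in>topspace G. r (i g) = s g \<and> s (i g) = r g \<and> m g (i g) = r g \<and> m (i g) g = s g) \<and>
     continuous_map G (subtopology G U) r \<and>
     continuous_map G (subtopology G U) s \<and>
     continuous_map G G i \<and>
     continuous_map
       (subtopology (prod_topology G G) {(g, h). g \<in> topspace G \<and> h \<in> topspace G \<and> s g = r h})
       G (\<lambda>(g, h). m g h)"

definition proper_groupoid ::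
  "'a topology \<Rightarrow> 'a set \<Rightarrow> ('a \<Rightarrow> 'a) \<Rightarrow> ('a \<Rightarrow> 'a) \<Rightarrow> bool" where
  "proper_groupoid G U r s \<longleftrightarrow>
     closed_map G (prod_topology (subtopology G U) (subtopology G U)) (\<lambda>g. (r g, s g)) \<and>
     (\<forall>x\<in>U. \<forall>y\<in>U. compactin G {g \<in> topspace G. r g = x \<and> s g = y})"

end

theory Submission
  imports Defs
begin

text \<open>Two points of some \<open>S \<in> \<H>X\<close> cannot be separated by disjoint open sets. Hence \<open>S\<close> lies in
  the closure of every open set it meets, which gives \<open>\<Omega>'_V = \<Omega>_V \<inter> \<Omega>^{cl V - V}\<close> and thus (a)
  for any space \<open>X\<close>; and an open set inside a Hausdorff subspace contains at most one point of
  \<open>S\<close>. For (b), every \<open>S\<close> meeting \<open>K\<close> lies in one fixed quasi-compact set, which is covered by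
  finitely many open sets with compact (Hausdorff) neighbourhoods, each holding at most one point
  of \<open>S\<close>. For (c), a quasi-compact \<open>K \<subseteq> G\<close> lies in the preimage under the proper map \<open>(r, s)\<close>
  of the compact, hence closed, set \<open>(r, s) K\<close>; that preimage is closed and quasi-compact.\<close>

lemma HSet_inter_nonempty:
  assumes "S \<in> HSet X" "openin X V" "openin X W" "S \<inter> V \<noteq> {}" "S \<inter> W \<noteq> {}"
  shows "V \<inter> W \<noteq> {}"
  using assms unfolding HSet_def by (auto dest!: spec[of _ "{V, W}"])

lemma HSet_subset_topspace: "S \<in> HSet X \<Longrightarrow> S \<subseteq> topspace X"
  unfolding HSet_def mem_Collect_eq by (elim conjE)

lemma HSet_nonempty: "S \<in> HSet X \<Longrightarrow> S \<noteq> {}"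
  unfolding HSet_def mem_Collect_eq by (elim conjE)

lemma HSet_subset_closure_of:
  assumes S: "S \<in> HSet X" and W: "openin X W" "S \<inter> W \<noteq> {}"
  shows "S \<subseteq> X closure_of W"
proof
  fix y assume y: "y \<in> S"
  have "W \<inter> T \<noteq> {}" if "y \<in> T" "openin X T" for T
    using HSet_inter_nonempty[OF S W(1) that(2) W(2)] y that(1) by blast
  then show "y \<in> X closure_of W"
    using y HSet_subset_topspace[OF S] by (auto simp: in_closure_of)
qed

lemma HSet_Hausdorff_open_subsingleton:
  assumes S: "S \<in> HSet X" and W: "openin X W" "W \<subseteq> L"
    and H: "Hausdorff_space (subtopology X L)"
    and z: "z \<in> S \<inter> W" and z': "z' \<in> S \<inter> W"
  shows "z = z'"
proof (rule ccontr)
  assume "z \<noteq> z'"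
  moreover have "z \<in> topspace (subtopology X L)" "z' \<in> topspace (subtopology X L)"
    using z z' W HSet_subset_topspace[OF S] by auto
  ultimately obtain U V where "openin (subtopology X L) U" "openin (subtopology X L) V"
    "z \<in> U" "z' \<in> V" "disjnt U V"
    using H unfolding Hausdorff_space_def by metis
  then obtain U' V' where U': "openin X U'" "z \<in> U'" and V': "openin X V'" "z' \<in> V'"
    and disj: "U' \<inter> V' \<inter> L = {}"
    by (auto simp: openin_subtopology disjnt_def)
  have "(U' \<inter> W) \<inter> (V' \<inter> W) \<noteq> {}"
    using HSet_inter_nonempty[OF S, of "U' \<inter> W" "V' \<inter> W"] U' V' W(1) z z' by blast
  then show False using disj W(2) by blast
qed

lemma card_le_of_cover_by_subsingletons:
  assumes "finite \<F>" "S \<subseteq> \<Union>\<F>" "\<And>W x y. W \<in> \<F> \<Longrightarrow> x \<in> S \<inter> W \<Longrightarrow> y \<in> S \<inter> W \<Longrightarrow> x = y"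
  shows "finite S \<and> card S \<le> card \<F>"
proof -
  have "\<forall>x\<in>S. \<exists>W. W \<in> \<F> \<and> x \<in> W" using assms(2) by blast
  then obtain f where f: "\<forall>x\<in>S. f x \<in> \<F> \<and> x \<in> f x"
    by (auto dest!: bchoice)
  have inj: "inj_on f S"
  proof (rule inj_onI)
    fix x y assume "x \<in> S" "y \<in> S" "f x = f y"
    then show "x = y" using assms(3)[of "f x" x y] f by auto
  qed
  have sub: "f ` S \<subseteq> \<F>" using f by blast
  have "finite S"
    using finite_subset[OF sub assms(1)] inj by (rule finite_imageD)
  with card_inj_on_le[OF inj sub assms(1)] show ?thesis by blast
qed

lemma HSet_card_le_of_cover:
  assumes S: "S \<in> HSet X" and "finite \<F>" "S \<subseteq> \<Union>\<F>"
    and \<F>: "\<And>W. W \<in> \<F> \<Longrightarrow> openin X W \<and> (\<exists>L. W \<subseteq> L \<and> hcompact X L)"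
  shows "finite S \<and> card S \<le> card \<F>"
proof (rule card_le_of_cover_by_subsingletons[OF assms(2,3)])
  fix W x y assume "W \<in> \<F>" "x \<in> S \<inter> W" "y \<in> S \<inter> W"
  then show "x = y"
    using \<F> HSet_Hausdorff_open_subsingleton[OF S] unfolding hcompact_def by metis
qed

lemma loc_compact_finite_cover:
  assumes "loc_compact X" "compactin X T"
  obtains \<F> where "finite \<F>" "T \<subseteq> \<Union>\<F>"
    "\<And>W. W \<in> \<F> \<Longrightarrow> openin X W \<and> (\<exists>L. W \<subseteq> L \<and> hcompact X L)"
proof -
  let ?\<U> = "{W. openin X W \<and> (\<exists>L. W \<subseteq> L \<and> hcompact X L)}"
  have "T \<subseteq> \<Union>?\<U>"
  proof
    fix x assume "x \<in> T"
    then have "x \<in> topspace X" using assms(2) compactin_subset_topspace by blast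
    then obtain W L where "openin X W" "x \<in> W" "W \<subseteq> L" "hcompact X L"
      using assms(1) unfolding loc_compact_def by blast
    then show "x \<in> \<Union>?\<U>" by blast
  qed
  then obtain \<F> where \<F>: "finite \<F>" "\<F> \<subseteq> ?\<U>" "T \<subseteq> \<Union>\<F>"
    using compactinD[OF assms(2), of ?\<U>] by blast
  show thesis
    by (rule that[OF \<F>(1,3)]) (use \<F>(2) in blast)
qed

lemma HSet_card_bounded_in_compactin:
  assumes "loc_compact X" "compactin X T"
  obtains C :: nat where "C > 0" "\<And>S. S \<in> HSet X \<Longrightarrow> S \<subseteq> T \<Longrightarrow> finite S \<and> card S \<le> C"
proof -
  obtain \<F> where \<F>: "finite \<F>" "T \<subseteq> \<Union>\<F>"
    "\<And>W. W \<in> \<F> \<Longrightarrow> openin X W \<and> (\<exists>L. W \<subseteq> L \<and> hcompact X L)"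
    using loc_compact_finite_cover[OF assms] by blast
  have "finite S \<and> card S \<le> Suc (card \<F>)" if "S \<in> HSet X" "S \<subseteq> T" for S
  proof -
    have "finite S \<and> card S \<le> card \<F>"
      using HSet_card_le_of_cover[OF that(1) \<F>(1) _ \<F>(3)] that(2) \<F>(2) by blast
    then show ?thesis by linarith
  qed
  then show thesis using that[of "Suc (card \<F>)"] by blast
qed

lemma HSet_card_bounded_meeting_compact:
  assumes lc: "loc_compact X" and cl: "\<And>K. compactin X K \<Longrightarrow> compactin X (X closure_of K)"
    and K: "compactin X K"
  obtains C :: nat where "C > 0" "\<And>S. S \<in> HSet X \<Longrightarrow> S \<inter> K \<noteq> {} \<Longrightarrow> finite S \<and> card S \<le> C"
proof -
  obtain \<F> where \<F>: "finite \<F>" "K \<subseteq> \<Union>\<F>"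
    "\<And>W. W \<in> \<F> \<Longrightarrow> openin X W \<and> (\<exists>L. W \<subseteq> L \<and> hcompact X L)"
    using loc_compact_finite_cover[OF lc K] by blast
  define T where "T = (\<Union>W\<in>\<F>. X closure_of W)"
  have "compactin X (X closure_of W)" if W: "W \<in> \<F>" for W
  proof -
    obtain L where "W \<subseteq> L" "compactin X L"
      using \<F>(3)[OF W] unfolding hcompact_def by blast
    then show ?thesis
      using cl closed_compactin closedin_closure_of closure_of_mono by metis
  qed
  then have "compactin X T"
    unfolding T_def using \<F>(1) by (intro compactin_Union) auto
  then obtain C :: nat where "C > 0" "\<And>S. S \<in> HSet X \<Longrightarrow> S \<subseteq> T \<Longrightarrow> finite S \<and> card S \<le> C"
    using HSet_card_bounded_in_compactin[OF lc] by blast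
  moreover have "S \<subseteq> T" if S: "S \<in> HSet X" "S \<inter> K \<noteq> {}" for S
  proof -
    obtain W where "W \<in> \<F>" "S \<inter> W \<noteq> {}" using S(2) \<F>(2) by blast
    then show ?thesis
      using HSet_subset_closure_of[OF S(1)] \<F>(3) unfolding T_def by blast
  qed
  ultimately show thesis using that by blast
qed

lemma OmegaPrime_eq_Omega_Int_OmegaQ:
  assumes "openin X V"
  shows "OmegaPrime X V = Omega X V \<inter> OmegaQ X (X closure_of V - V)"
proof (intro equalityI subsetI)
  fix S assume "S \<in> OmegaPrime X V"
  then have "S \<in> HSet X" "S \<subseteq> V" by (simp_all add: OmegaPrime_def)
  moreover have "S \<noteq> {}" using \<open>S \<in> HSet X\<close> by (rule HSet_nonempty)
  ultimately show "S \<in> Omega X V \<inter> OmegaQ X (X closure_of V - V)"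
    by (auto simp: Omega_def OmegaQ_def)
next
  fix S assume "S \<in> Omega X V \<inter> OmegaQ X (X closure_of V - V)"
  then have S: "S \<in> HSet X" "S \<inter> V \<noteq> {}" "S \<inter> (X closure_of V - V) = {}"
    by (simp_all add: Omega_def OmegaQ_def)
  then have "S \<subseteq> X closure_of V" using HSet_subset_closure_of assms by blast
  with S show "S \<in> OmegaPrime X V" by (auto simp: OmegaPrime_def)
qed

lemma openin_HTop_OmegaPrime:
  assumes "openin X V" "rel_qcompact X V"
  shows "openin (HTop X) (OmegaPrime X V)"
proof -
  have "compactin X (X closure_of V - V)"
  proof (rule closed_compactin)
    show "compactin X (X closure_of V)" using assms(2) unfolding rel_qcompact_def by blast
    show "closedin X (X closure_of V - V)" using assms(1) by (simp add: closedin_diff)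
  qed auto
  then have "openin (HTop X) (OmegaQ X (X closure_of V - V))"
    unfolding HTop_def by (intro topology_generated_by_Basis) blast
  moreover have "openin (HTop X) (Omega X V)"
    unfolding HTop_def using assms(1) by (intro topology_generated_by_Basis) blast
  ultimately show ?thesis
    unfolding OmegaPrime_eq_Omega_Int_OmegaQ[OF assms(1)] by (rule openin_Int[rotated])
qed

lemma HTop'_eq_HTop: "HTop' X = HTop X"
proof (rule topology_eq[THEN iffD2], intro allI iffI)
  let ?\<S> = "{HSet X} \<union> {U. openin (HTop X) U} \<union>
    {OmegaPrime X V | V. openin X V \<and> rel_qcompact X V}"
  have HSet_open: "openin (HTop X) (HSet X)"
    unfolding HTop_def by (rule topology_generated_by_Basis) blast
  have generators_open: "openin (HTop X) U" if U: "U \<in> ?\<S>" for U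
  proof -
    consider "U = HSet X" | "openin (HTop X) U"
      | V where "U = OmegaPrime X V" "openin X V" "rel_qcompact X V"
      using U by blast
    then show ?thesis
      by cases (simp_all add: HSet_open openin_HTop_OmegaPrime)
  qed
  fix W assume "openin (HTop' X) W"
  then have "generate_topology_on ?\<S> W"
    unfolding HTop'_def by (rule openin_topology_generated_by)
  then show "openin (HTop X) W"
    using generators_open by (rule generate_topology_on_coarsest[OF istopology_openin, rotated])
next
  fix W assume "openin (HTop X) W"
  then show "openin (HTop' X) W"
    unfolding HTop'_def by (intro topology_generated_by_Basis) blast
qed

lemma proper_map_closure_of_compactin:
  assumes "proper_map X Y f" "continuous_map X Y f" "Hausdorff_space Y" "compactin X K"
  shows "compactin X (X closure_of K)"
proof -
  let ?P = "{x \<in> topspace X. f x \<in> f ` K}"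
  have "compactin Y (f ` K)" using assms(2,4) image_compactin by blast
  then have "closedin X ?P" "compactin X ?P"
    using assms(1-3) compactin_imp_closedin closedin_continuous_map_preimage
    unfolding proper_map_alt by blast+
  moreover have "K \<subseteq> ?P" using assms(4) compactin_subset_topspace by blast
  ultimately show ?thesis
    using closed_compactin closedin_closure_of closure_of_minimal by metis
qed

lemma proper_groupoid_closure_of_compactin:
  assumes "topological_groupoid G U r s m i" "proper_groupoid G U r s"
    "Hausdorff_space (subtopology G U)" "compactin G K"
  shows "compactin G (G closure_of K)"
proof (rule proper_map_closure_of_compactin[OF _ _ _ assms(4)])
  let ?Y = "subtopology G U"
  show "proper_map G (prod_topology ?Y ?Y) (\<lambda>g. (r g, s g))"
    using assms(1,2) unfolding proper_groupoid_def proper_map_def topological_groupoid_def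
    by auto
  show "continuous_map G (prod_topology ?Y ?Y) (\<lambda>g. (r g, s g))"
    using assms(1) unfolding topological_groupoid_def by (simp add: continuous_map_paired)
  show "Hausdorff_space (prod_topology ?Y ?Y)"
    using assms(3) Hausdorff_space_prod_topology by blast
qed

theorem proposition3p12:
  shows
   "(\<forall>X :: 'a topology.
       loc_compact X \<and> (\<forall>K. qcompact X K \<longrightarrow> qcompact X (X closure_of K)) \<longrightarrow>
         homeomorphic_map (HTop' X) (HTop X) id \<and>
         (\<forall>K. hcompact X K \<longrightarrow>
            (\<exists>C::nat. C > 0 \<and>
               (\<forall>S\<in>HSet X. S \<inter> K \<noteq> {} \<longrightarrow> finite S \<and> card S \<le> C)))) \<and>
    (\<forall>(G :: 'b topology) U r s m i.
       topological_groupoid G U r s m i \<and> loc_compact G \<and> proper_groupoid G U r s \<and>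
       Hausdorff_space (subtopology G U) \<longrightarrow>
         (\<forall>K. qcompact G K \<longrightarrow> qcompact G (G closure_of K)))"
proof (intro conjI allI impI)
  fix X :: "'a topology"
  show "homeomorphic_map (HTop' X) (HTop X) id" by (simp add: HTop'_eq_HTop)
next
  fix X :: "'a topology" and K
  assume X: "loc_compact X \<and> (\<forall>K. qcompact X K \<longrightarrow> qcompact X (X closure_of K))"
    and K: "hcompact X K"
  have "\<And>K. compactin X K \<Longrightarrow> compactin X (X closure_of K)"
    using X by (simp add: qcompact_def)
  moreover have "compactin X K" using K by (simp add: hcompact_def)
  ultimately obtain C :: nat where
    "C > 0" "\<And>S. S \<in> HSet X \<Longrightarrow> S \<inter> K \<noteq> {} \<Longrightarrow> finite S \<and> card S \<le> C"
    using HSet_card_bounded_meeting_compact X by blast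
  then show "\<exists>C::nat. C > 0 \<and> (\<forall>S\<in>HSet X. S \<inter> K \<noteq> {} \<longrightarrow> finite S \<and> card S \<le> C)"
    by blast
next
  fix G :: "'b topology" and U r s m i K
  assume "topological_groupoid G U r s m i \<and> loc_compact G \<and> proper_groupoid G U r s \<and>
       Hausdorff_space (subtopology G U)" "qcompact G K"
  then show "qcompact G (G closure_of K)"
    using proper_groupoid_closure_of_compactin unfolding qcompact_def by blast
qed

end
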